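(* Let $g$ be an $n$-person WTT game form, $i\in[n]$, and let $\ell,j,k$ be three distinct elements of $X_i$ such that $H_\ell\stackrel{c}{\Longrightarrow}H_j$ and $H_\ell\stackrel{d}{\Longrightarrow}H_k$ for some outcomes $c,d\in A$. Then $c=d$.
   Context: Let $X_1,\dots,X_n$ and $A$ be finite nonempty sets. An $n$-person game form is a map $g: X_1\times\cdots\times X_n\to A$; elements of $X=X_1\times\cdots\times X_n$ are strategy profiles, elements of $A$ are outcomes. For a direction $i\in[n]$ write $X_{-i}=\prod_{t\neq i}X_t$, and for $s\in X_i$, $y\in X_{-i}$ write $(s,y)$ for the profile with $i$-th coordinate $s$ and other coordinates $y$. The hyperplane perpendicular to direction $i$ at $s\in X_i$ is $H_s=\{x\in X: x_i=s\}$. $g$ is weakly totally tight (WTT) if for every $i\in[n]$, all $s\neq s'$ in $X_i$ and all $y\neq y'$ in $X_{-i}$, at least one of $g(s,y)=g(s,y')$, $g(s,y)=g(s',y)$, $g(s',y')=g(s',y)$, $g(s',y')=g(s,y')$ holds. For a direction $i$ and distinct $j,k\in X_i$, set $H_j^{\neq}(k)=\{(j,y): y\in X_{-i},\ g(j,y)\neq g(k,y)\}$. We write $H_j\stackrel{c}{\longrightarrow}H_k$ if $g(x)=c$ for all $x\in H_j^{\neq}(k)$; we write $H_j\stackrel{c}{\Longrightarrow}H_k$ if $H_j\stackrel{c}{\longrightarrow}H_k$ and there is no outcome $d$ with $H_k\stackrel{d}{\longrightarrow}H_j$. *)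

theory Defs
  imports "HOL-Library.FuncSet"
begin

(* Players are 0..<n. Strategy sets X i. A strategy profile is an element of
   PiE {0..<n} X.  X_{-i} is PiE ({0..<n} - {i}) X, and (s,y) is y(i := s). *)

definition profiles :: "nat \<Rightarrow> (nat \<Rightarrow> 'a set) \<Rightarrow> (nat \<Rightarrow> 'a) set" where
  "profiles n X = PiE {0..<n} X"

definition others :: "nat \<Rightarrow> (nat \<Rightarrow> 'a set) \<Rightarrow> nat \<Rightarrow> (nat \<Rightarrow> 'a) set" where
  "others n X i = PiE ({0..<n} - {i}) X"

definition join :: "nat \<Rightarrow> 'a \<Rightarrow> (nat \<Rightarrow> 'a) \<Rightarrow> (nat \<Rightarrow> 'a)" where
  "join i s y = y(i := s)"

definition game_form ::
  "nat \<Rightarrow> (nat \<Rightarrow> 'a set) \<Rightarrow> 'b set \<Rightarrow> ((nat \<Rightarrow> 'a) \<Rightarrow> 'b) \<Rightarrow> bool" where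
  "game_form n X A g \<longleftrightarrow>
     (\<forall>i<n. finite (X i) \<and> X i \<noteq> {}) \<and> finite A \<and> A \<noteq> {} \<and>
     (\<forall>x\<in>profiles n X. g x \<in> A)"

definition WTT :: "nat \<Rightarrow> (nat \<Rightarrow> 'a set) \<Rightarrow> ((nat \<Rightarrow> 'a) \<Rightarrow> 'b) \<Rightarrow> bool" where
  "WTT n X g \<longleftrightarrow>
     (\<forall>i<n. \<forall>s\<in>X i. \<forall>s'\<in>X i. \<forall>y\<in>others n X i. \<forall>y'\<in>others n X i.
        s \<noteq> s' \<longrightarrow> y \<noteq> y' \<longrightarrow>
        g (join i s y) = g (join i s y') \<or> g (join i s y) = g (join i s' y) \<or>
        g (join i s' y') = g (join i s' y) \<or> g (join i s' y') = g (join i s y'))"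

definition Hneq ::
  "nat \<Rightarrow> (nat \<Rightarrow> 'a set) \<Rightarrow> ((nat \<Rightarrow> 'a) \<Rightarrow> 'b) \<Rightarrow> nat \<Rightarrow> 'a \<Rightarrow> 'a \<Rightarrow> (nat \<Rightarrow> 'a) set" where
  "Hneq n X g i j k = {join i j y | y. y \<in> others n X i \<and> g (join i j y) \<noteq> g (join i k y)}"

definition arrow ::
  "nat \<Rightarrow> (nat \<Rightarrow> 'a set) \<Rightarrow> ((nat \<Rightarrow> 'a) \<Rightarrow> 'b) \<Rightarrow> nat \<Rightarrow> 'a \<Rightarrow> 'b \<Rightarrow> 'a \<Rightarrow> bool" where
  "arrow n X g i j c k \<longleftrightarrow> (\<forall>x\<in>Hneq n X g i j k. g x = c)"

definition strong_arrow ::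
  "nat \<Rightarrow> (nat \<Rightarrow> 'a set) \<Rightarrow> 'b set \<Rightarrow> ((nat \<Rightarrow> 'a) \<Rightarrow> 'b) \<Rightarrow> nat \<Rightarrow> 'a \<Rightarrow> 'b \<Rightarrow> 'a \<Rightarrow> bool" where
  "strong_arrow n X A g i j c k \<longleftrightarrow>
     arrow n X g i j c k \<and> \<not> (\<exists>d\<in>A. arrow n X g i k d j)"

end

theory Submission
  imports Defs
begin

text \<open>Suppose \<open>c \<noteq> d\<close>. Because \<open>H\<^sub>j\<close> does not send \<open>d\<close> to \<open>H\<^sub>l\<close>, some
  \<open>y\<^sub>1\<close> has \<open>g(j,y\<^sub>1) \<noteq> g(l,y\<^sub>1)\<close> and \<open>g(j,y\<^sub>1) \<noteq> d\<close>; then \<open>g(l,y\<^sub>1) = c\<close>,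
  and as \<open>c \<noteq> d\<close> also \<open>g(k,y\<^sub>1) = c\<close>. Symmetrically some \<open>y\<^sub>2\<close> has
  \<open>g(j,y\<^sub>2) = d\<close> and \<open>g(k,y\<^sub>2) \<notin> {c,d}\<close>. The four outcomes of \<open>j,k\<close> on
  \<open>y\<^sub>1,y\<^sub>2\<close> then violate weak total tightness.\<close>

lemma arrowD:
  assumes "arrow n X g i j c k" "y \<in> others n X i" "g (join i j y) \<noteq> g (join i k y)"
  shows "g (join i j y) = c"
  using assms unfolding arrow_def Hneq_def by blast

lemma not_arrowE:
  assumes "\<not> arrow n X g i j d k"
  obtains y where "y \<in> others n X i" "g (join i j y) \<noteq> g (join i k y)" "g (join i j y) \<noteq> d"
  using assms unfolding arrow_def Hneq_def by blast

lemma strong_arrowD: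
  assumes "strong_arrow n X A g i j c k" "d \<in> A"
  shows "arrow n X g i j c k" "\<not> arrow n X g i k d j"
  using assms unfolding strong_arrow_def by blast+

lemma WTTD:
  assumes "WTT n X g" "i < n" "s \<in> X i" "s' \<in> X i" "s \<noteq> s'"
    and "y \<in> others n X i" "y' \<in> others n X i" "y \<noteq> y'"
  shows "g (join i s y) = g (join i s y') \<or> g (join i s y) = g (join i s' y) \<or>
         g (join i s' y') = g (join i s' y) \<or> g (join i s' y') = g (join i s y')"
  using assms unfolding WTT_def by blast

lemma arrows_distinct_outcomes_witness:
  assumes lj: "arrow n X g i l c j" and lk: "arrow n X g i l d k" and "c \<noteq> d"
    and jl: "\<not> arrow n X g i j d l"
  obtains y where "y \<in> others n X i" "g (join i j y) \<notin> {c, d}" "g (join i k y) = c"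
proof -
  obtain y where y: "y \<in> others n X i" "g (join i j y) \<noteq> g (join i l y)" "g (join i j y) \<noteq> d"
    using jl by (rule not_arrowE)
  have l_c: "g (join i l y) = c"
    using arrowD[OF lj y(1)] y(2) by metis
  have "g (join i l y) = g (join i k y)"
    using arrowD[OF lk y(1)] l_c \<open>c \<noteq> d\<close> by metis
  then show thesis
    using that y l_c by auto
qed

theorem mainTheorem4:
  fixes n :: nat and X :: "nat \<Rightarrow> 'a set" and A :: "'b set"
    and g :: "(nat \<Rightarrow> 'a) \<Rightarrow> 'b" and i :: nat and l j k :: 'a and c d :: 'b
  assumes "game_form n X A g"
    and "WTT n X g"
    and "i < n"
    and "l \<in> X i" and "j \<in> X i" and "k \<in> X i"
    and "l \<noteq> j" and "l \<noteq> k" and "j \<noteq> k"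
    and "c \<in> A" and "d \<in> A"
    and "strong_arrow n X A g i l c j"
    and "strong_arrow n X A g i l d k"
  shows "c = d"
proof (rule ccontr)
  assume "c \<noteq> d"
  note lj = strong_arrowD[OF assms(12,11)] and lk = strong_arrowD[OF assms(13,10)]
  obtain y\<^sub>1 where y\<^sub>1: "y\<^sub>1 \<in> others n X i" "g (join i j y\<^sub>1) \<notin> {c, d}" "g (join i k y\<^sub>1) = c"
    using arrows_distinct_outcomes_witness[OF lj(1) lk(1) \<open>c \<noteq> d\<close> lj(2)] .
  obtain y\<^sub>2 where y\<^sub>2: "y\<^sub>2 \<in> others n X i" "g (join i k y\<^sub>2) \<notin> {d, c}" "g (join i j y\<^sub>2) = d"
    using arrows_distinct_outcomes_witness[OF lk(1) lj(1) \<open>c \<noteq> d\<close>[symmetric] lk(2)] .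
  have "y\<^sub>1 \<noteq> y\<^sub>2"
    using y\<^sub>1(3) y\<^sub>2(2) by auto
  from WTTD[OF assms(2,3,5,6,9) y\<^sub>1(1) y\<^sub>2(1) this] show False
    using y\<^sub>1 y\<^sub>2 by auto
qed

end
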